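(* Let $I$ be a nontrivial real interval, let $n\ge 2$ be an integer, and let $g\colon I^{(n)}\to I$ be a function. The following assertions are equivalent: (i) $g$ is $n$-associative (in the sense defined in the context); (ii) $g_1\circ g=g$, and $g(\mathbf{x}\,g(\mathbf{y})\,\mathbf{z})=g(\mathbf{x}'\,g(\mathbf{y}')\,\mathbf{z}')$ for all strings $\mathbf{x},\mathbf{y},\mathbf{z},\mathbf{x}',\mathbf{y}',\mathbf{z}'$ over $I$ such that $\mathbf{x}\mathbf{y}\mathbf{z},\mathbf{x}'\mathbf{y}'\mathbf{z}'\in I^{(n)}$, $\mathbf{y},\mathbf{y}'\in I^{(n)}$, and $\mathbf{x}\mathbf{y}\mathbf{z}=\mathbf{x}'\mathbf{y}'\mathbf{z}'$; (iii) $g(\mathbf{x}\,g(\mathbf{y})\,\mathbf{z})=g(\mathbf{x}\mathbf{y}\mathbf{z})$ for all strings $\mathbf{x},\mathbf{y},\mathbf{z}$ over $I$ such that $\mathbf{x}\mathbf{y}\mathbf{z}\in I^{(n)}$ and $\mathbf{y}\in I^{(n)}$; (iv) $g_1\circ g=g$, and $g(g(\mathbf{x}_1)\cdots g(\mathbf{x}_n))=g(\mathbf{x}_1\cdots\mathbf{x}_n)$ for all $\mathbf{x}_1,\dots,\mathbf{x}_n\in I^{(n)}$.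
   Context: Tuples in $I^m$ are regarded as strings of length $m$ over $I$; concatenation of strings is written by juxtaposition; $\varepsilon$ is the empty string and $I^0=\{\varepsilon\}$. Let $A_n=\{m\in\mathbb{N}: m\equiv 1 \pmod{n-1}\}$ and $I^{(n)}=\bigcup_{m\in A_n}I^m$. For $g\colon I^{(n)}\to I$, $g_m$ denotes the restriction of $g$ to $I^m$. A function $f\colon I^n\to I$ is associative if $f(\mathbf{x}\,f(\mathbf{y})\,\mathbf{z})=f(\mathbf{x}'\,f(\mathbf{y}')\,\mathbf{z}')$ whenever $\mathbf{x}\mathbf{y}\mathbf{z},\mathbf{x}'\mathbf{y}'\mathbf{z}'\in I^{2n-1}$, $\mathbf{y},\mathbf{y}'\in I^n$ and $\mathbf{x}\mathbf{y}\mathbf{z}=\mathbf{x}'\mathbf{y}'\mathbf{z}'$. A function $g\colon I^{(n)}\to I$ is called $n$-associative if (a) $g_n$ is associative; (b) for every $m\in A_n$ with $m>n$ and all $x_1,\dots,x_m\in I$, $g_m(x_1\cdots x_m)=g_n(g_n(\cdots g_n(g_n(x_1\cdots x_n)x_{n+1}\cdots x_{2n-1})\cdots)x_{m-n+2}\cdots x_m)$; and (c) $g_1\circ g=g$ and $g(\mathbf{x}\,g_1(y)\,\mathbf{z})=g(\mathbf{x}y\mathbf{z})$ for all strings $\mathbf{x},\mathbf{z}$ and $y\in I$ with $\mathbf{x}y\mathbf{z}\in I^{(n)}$. *)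

theory Defs
  imports "HOL-Analysis.Analysis"
begin

text \<open>Strings over I are real lists whose entries lie in I.
  Membership in I^(n) = union of I^m for m in A_n, with A_n = {m >= 1. m = 1 mod (n-1)}.\<close>

definition in_In :: "real set \<Rightarrow> nat \<Rightarrow> real list \<Rightarrow> bool" where
  "in_In I n xs \<longleftrightarrow> set xs \<subseteq> I \<and> 1 \<le> length xs \<and> length xs mod (n - 1) = 1 mod (n - 1)"

definition nontrivial_interval :: "real set \<Rightarrow> bool" where
  "nontrivial_interval I \<longleftrightarrow> is_interval I \<and> (\<exists>a\<in>I. \<exists>b\<in>I. a \<noteq> b)"

definition assoc_n :: "real set \<Rightarrow> nat \<Rightarrow> (real list \<Rightarrow> real) \<Rightarrow> bool" where
  "assoc_n I n g \<longleftrightarrow>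
     (\<forall>x y z x' y' z'. set (x @ y @ z) \<subseteq> I \<and> set (x' @ y' @ z') \<subseteq> I \<and>
        length (x @ y @ z) = 2 * n - 1 \<and> length y = n \<and> length y' = n \<and>
        x @ y @ z = x' @ y' @ z' \<longrightarrow>
        g (x @ [g y] @ z) = g (x' @ [g y'] @ z'))"

function nest :: "(real list \<Rightarrow> real) \<Rightarrow> nat \<Rightarrow> real list \<Rightarrow> real" where
  "nest g n xs = (if n \<le> 1 \<or> length xs \<le> n then g xs
                  else nest g n (g (take n xs) # drop n xs))"
  by pat_completeness auto
termination by (relation "Wellfounded.measure (\<lambda>(g, n, xs). length xs)") auto

definition n_associative :: "real set \<Rightarrow> nat \<Rightarrow> (real list \<Rightarrow> real) \<Rightarrow> bool" where
  "n_associative I n g \<longleftrightarrow>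
     assoc_n I n g \<and>
     (\<forall>xs. in_In I n xs \<and> length xs > n \<longrightarrow> g xs = nest g n xs) \<and>
     (\<forall>xs. in_In I n xs \<longrightarrow> g [g xs] = g xs) \<and>
     (\<forall>x y z. in_In I n (x @ [y] @ z) \<longrightarrow> g (x @ [g [y]] @ z) = g (x @ [y] @ z))"

end

theory Submission
  imports Defs
begin

text \<open>
  All conditions are compared with (iii): evaluating any inner string y of I^(n) in place
  does not change the value of g. Condition (iii) makes both sides of (ii) equal to g of the whole
  string, and it yields the clauses of (i) directly. Conversely, under (i) an inner string of
  length n can be absorbed: the left-nested evaluation (b) moves it, or a block of length n
  containing its value, to the front, where associativity of g_n on strings of length 2n-1
  applies. Longer inner strings are then collapsed from the left. Condition (iii) gives (iv) by
  absorbing the n blocks one at a time; conversely, any x g(y) z in I^(n) other than g(y)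
  splits into n-1 letters around a middle block containing g(y), so (iv) reduces it to a shorter
  instance.
\<close>

lemma in_In_iff_length: "in_In I n xs \<longleftrightarrow> set xs \<subseteq> I \<and> (\<exists>k. length xs = 1 + k * (n - 1))"
proof -
  have "1 \<le> m \<and> m mod (n - 1) = 1 mod (n - 1) \<longleftrightarrow> (\<exists>k. m = 1 + k * (n - 1))" for m
  proof
    assume "1 \<le> m \<and> m mod (n - 1) = 1 mod (n - 1)"
    then have "(n - 1) dvd (m - 1)"
      using mod_eq_dvd_iff_nat by blast
    then obtain k where "m - 1 = k * (n - 1)"
      by (metis dvdE mult.commute)
    then show "\<exists>k. m = 1 + k * (n - 1)"
      using \<open>1 \<le> m \<and> _\<close> by (intro exI[of _ k]) linarith
  next
    assume "\<exists>k. m = 1 + k * (n - 1)"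
    then obtain k where "m = 1 + k * (n - 1)" ..
    then show "1 \<le> m \<and> m mod (n - 1) = 1 mod (n - 1)"
      by (simp only: mod_mult_self1) simp
  qed
  then show ?thesis by (auto simp: in_In_def)
qed

lemma in_In_singleton [simp]: "in_In I n [a] \<longleftrightarrow> a \<in> I"
  by (simp add: in_In_def)

lemma in_In_subst_infix:
  assumes "in_In I n y" and "in_In I n y'"
  shows "in_In I n (x @ y @ z) \<longleftrightarrow> in_In I n (x @ y' @ z)"
proof -
  obtain k k' where "length y = 1 + k * (n - 1)" "length y' = 1 + k' * (n - 1)"
    using assms by (auto simp: in_In_iff_length)
  then have "length (x @ y @ z) = (length x + length z + 1) + k * (n - 1)"
    and "length (x @ y' @ z) = (length x + length z + 1) + k' * (n - 1)"
    by simp_all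
  then have "length (x @ y @ z) mod (n - 1) = length (x @ y' @ z) mod (n - 1)"
    by (simp only: mod_mult_self1)
  then show ?thesis
    using assms by (auto simp: in_In_def)
qed

lemma in_In_length_cases:
  assumes "in_In I n xs" and "n \<ge> 1"
  shows "length xs = 1 \<or> length xs \<ge> n"
proof -
  obtain k where "length xs = 1 + k * (n - 1)"
    using assms(1) by (auto simp: in_In_iff_length)
  then show ?thesis
    using assms(2) by (cases k) auto
qed

lemma in_In_of_length_n:
  assumes "set xs \<subseteq> I" and "length xs = n" and "n \<ge> 1"
  shows "in_In I n xs"
  using assms by (auto simp: in_In_iff_length intro: exI[of _ 1])

lemma nest_short: "length xs \<le> n \<Longrightarrow> nest g n xs = g xs"
  by simp

lemma nest_reduce_prefix:
  "n \<ge> 2 \<Longrightarrow> n < length xs \<Longrightarrow> nest g n xs = nest g n (g (take n xs) # drop n xs)"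
  by simp

declare nest.simps [simp del]

lemma split_off_outer:
  assumes "d \<le> length x + length z"
  obtains x1 x2 z1 z2 where "x = x1 @ x2" "z = z1 @ z2" "length x1 + length z2 = d"
proof (cases "d \<le> length x")
  case True
  then show ?thesis
    using that[of "take d x" "drop d x" z "[]"] by simp
next
  case False
  then show ?thesis
    using that[of x "[]" "take (length x + length z - d) z" "drop (length x + length z - d) z"] assms
    by simp
qed

definition variadic_assoc :: "real set \<Rightarrow> nat \<Rightarrow> (real list \<Rightarrow> real) \<Rightarrow> bool" where
  "variadic_assoc I n g \<longleftrightarrow>
     (\<forall>x y z. in_In I n (x @ y @ z) \<and> in_In I n y \<longrightarrow> g (x @ [g y] @ z) = g (x @ y @ z))"

lemma variadic_assoc_iff_idem_and_infix_invariant: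
  "variadic_assoc I n g \<longleftrightarrow>
     (\<forall>xs. in_In I n xs \<longrightarrow> g [g xs] = g xs) \<and>
     (\<forall>x y z x' y' z'. in_In I n (x @ y @ z) \<and> in_In I n (x' @ y' @ z') \<and>
        in_In I n y \<and> in_In I n y' \<and> x @ y @ z = x' @ y' @ z' \<longrightarrow>
        g (x @ [g y] @ z) = g (x' @ [g y'] @ z'))"
  (is "_ \<longleftrightarrow> ?idem \<and> ?invariant")
proof
  assume "variadic_assoc I n g"
  then show "?idem \<and> ?invariant"
    unfolding variadic_assoc_def by (metis append.right_neutral append_Nil)
next
  assume "?idem \<and> ?invariant"
  then have "g (x @ [g y] @ z) = g ([] @ [g (x @ y @ z)] @ [])"
    and "g [g (x @ y @ z)] = g (x @ y @ z)"
    if "in_In I n (x @ y @ z)" "in_In I n y" for x y z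
    using that by (metis append.right_neutral append_Nil)+
  then show "variadic_assoc I n g"
    unfolding variadic_assoc_def by simp
qed

lemma variadic_assoc_absorb_blocks:
  assumes va: "variadic_assoc I n g" and blocks: "\<forall>xs\<in>set xss. in_In I n xs"
  shows "in_In I n (ps @ map g xss) \<Longrightarrow>
    in_In I n (ps @ concat xss) \<and> g (ps @ map g xss) = g (ps @ concat xss)"
  using blocks
proof (induction xss arbitrary: ps)
  case Nil
  then show ?case by simp
next
  case (Cons xs xss)
  then have xs: "in_In I n xs"
    by simp
  have "in_In I n ((ps @ [g xs]) @ map g xss)"
    using Cons.prems(1) by simp
  then have "in_In I n (ps @ [g xs] @ concat xss)"
    and "g (ps @ [g xs] @ map g xss) = g (ps @ [g xs] @ concat xss)"
    using Cons.IH[of "ps @ [g xs]"] Cons.prems(2) by simp_all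
  moreover have "in_In I n [g xs]"
    using Cons.prems(1) by (simp add: in_In_def)
  ultimately show ?case
    using va xs in_In_subst_infix[of I n xs "[g xs]" ps "concat xss"]
    unfolding variadic_assoc_def by auto
qed

context
  fixes I :: "real set" and n :: nat and g :: "real list \<Rightarrow> real"
  assumes n_ge_2: "n \<ge> 2"
    and closed: "\<And>xs. in_In I n xs \<Longrightarrow> g xs \<in> I"
begin

lemma in_In_reduce_prefix:
  assumes "in_In I n xs" and "n \<le> length xs"
  shows "in_In I n (g (take n xs) # drop n xs)"
proof -
  have "in_In I n (take n xs)"
    using assms n_ge_2 by (intro in_In_of_length_n) (auto simp: in_In_def dest: in_set_takeD)
  then show ?thesis
    using assms(1) in_In_subst_infix[of I n "take n xs" "[g (take n xs)]" "[]" "drop n xs"] closed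
    by simp
qed

lemma reduce_prefix_of_nest:
  assumes nested: "\<And>xs. in_In I n xs \<Longrightarrow> n < length xs \<Longrightarrow> g xs = nest g n xs"
    and "in_In I n w" and "n < length w"
  shows "g w = g (g (take n w) # drop n w)"
proof -
  let ?w' = "g (take n w) # drop n w"
  have "in_In I n ?w'"
    using assms(2,3) by (simp add: in_In_reduce_prefix)
  then have "nest g n ?w' = g ?w'"
    using nested nest_short by (cases "n < length ?w'") auto
  moreover have "g w = nest g n ?w'"
    using assms n_ge_2 by (simp add: nest_reduce_prefix)
  ultimately show ?thesis by simp
qed

context
  assumes nested: "\<And>xs. in_In I n xs \<Longrightarrow> n < length xs \<Longrightarrow> g xs = nest g n xs"
    and idem: "\<And>xs. in_In I n xs \<Longrightarrow> g [g xs] = g xs"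
begin

lemma absorb_prefix:
  assumes "in_In I n (y @ z)" and "length y = n"
  shows "g (g y # z) = g (y @ z)"
proof (cases "z = []")
  case True
  then show ?thesis
    using assms idem by simp
next
  case False
  then show ?thesis
    using assms n_ge_2 reduce_prefix_of_nest[OF nested, of "y @ z"] by simp
qed

lemma absorb_infix_of_length_n:
  assumes assoc: "assoc_n I n g"
  shows "in_In I n (x @ y @ z) \<Longrightarrow> length y = n \<Longrightarrow> g (x @ [g y] @ z) = g (x @ y @ z)"
proof (induction "length x" arbitrary: x z rule: less_induct)
  case less
  have y: "in_In I n y"
    using less.prems n_ge_2 by (intro in_In_of_length_n) (auto simp: in_In_def)
  have s: "in_In I n (x @ [g y] @ z)"
    using less.prems(1) y closed in_In_subst_infix[of I n y "[g y]" x z] by simp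
  consider "x = []" | "n \<le> length x" | "0 < length x" "length x < n"
    by fastforce
  then show ?case
  proof cases
    case 1
    then show ?thesis
      using absorb_prefix less.prems by simp
  next
    case 2
    let ?x' = "g (take n x) # drop n x"
    have "in_In I n (?x' @ y @ z)"
      using in_In_reduce_prefix[of "x @ y @ z"] less.prems 2 by simp
    moreover have "length ?x' < length x"
      using 2 n_ge_2 by simp
    ultimately have IH: "g (?x' @ [g y] @ z) = g (?x' @ y @ z)"
      using less.hyps less.prems(2) by blast
    have "g (x @ [g y] @ z) = g (?x' @ [g y] @ z)"
      using absorb_prefix[of "take n x" "drop n x @ [g y] @ z"] s 2 by (simp flip: append_assoc)
    also have "\<dots> = g (?x' @ y @ z)"
      by (fact IH)
    also have "\<dots> = g (x @ y @ z)"
      using absorb_prefix[of "take n x" "drop n x @ y @ z"] less.prems(1) 2 by (simp flip: append_assoc)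
    finally show ?thesis .
  next
    case 3
    \<comment> \<open>Split z so that x y z1 has length 2n-1; then x [g y] z1 has length n.\<close>
    define k where "k = n - length x - 1"
    define u where "u = x @ y @ take k z"
    let ?w = "x @ y @ z"
    have "length (x @ [g y] @ z) \<ge> n"
      using in_In_length_cases[OF s] 3 n_ge_2 by auto
    then have k_le: "k \<le> length z"
      by (simp add: k_def)
    have w_split: "?w = u @ drop k z" "length u = 2 * n - 1"
      using k_le 3 less.prems(2) by (simp_all add: u_def k_def)
    have assoc_step: "g (x @ [g y] @ take k z) = g ([] @ [g (take n u)] @ drop n u)"
    proof (rule assoc[unfolded assoc_n_def, rule_format], intro conjI)
      have u_set: "set u \<subseteq> I"
        using less.prems(1) by (auto simp: u_def in_In_def dest: in_set_takeD)
      then show "set (x @ y @ take k z) \<subseteq> I"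
        by (simp add: u_def)
      show "set ([] @ take n u @ drop n u) \<subseteq> I"
        using u_set by (simp only: append_Nil append_take_drop_id)
    qed (use w_split less.prems(2) n_ge_2 in \<open>simp_all add: u_def\<close>)
    have "g (x @ [g y] @ z) = g (g (x @ [g y] @ take k z) # drop k z)"
      using absorb_prefix[of "x @ [g y] @ take k z" "drop k z"] s k_le 3 by (simp add: k_def)
    also have "g (x @ [g y] @ take k z) = g (g (take n u) # drop n u)"
      using assoc_step by simp
    also have "g (g (g (take n u) # drop n u) # drop k z) = g (g (take n ?w) # drop n ?w)"
      using absorb_prefix[of "g (take n u) # drop n u" "drop k z"]
        in_In_reduce_prefix[of ?w] less.prems w_split n_ge_2 by simp
    also have "\<dots> = g ?w"
      using reduce_prefix_of_nest[OF nested, of ?w] less.prems w_split n_ge_2 by simp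
    finally show ?thesis .
  qed
qed

end


lemma n_associative_imp_variadic_assoc:
  assumes "n_associative I n g"
  shows "variadic_assoc I n g"
  unfolding variadic_assoc_def
proof (intro allI impI, elim conjE)
  have nested: "\<And>xs. in_In I n xs \<Longrightarrow> n < length xs \<Longrightarrow> g xs = nest g n xs"
    and idem: "\<And>xs. in_In I n xs \<Longrightarrow> g [g xs] = g xs"
    and assoc: "assoc_n I n g"
    and singleton: "\<And>x y z. in_In I n (x @ [y] @ z) \<Longrightarrow> g (x @ [g [y]] @ z) = g (x @ [y] @ z)"
    using assms unfolding n_associative_def by auto
  note absorb_n = absorb_infix_of_length_n[OF nested idem assoc]
  show "g (x @ [g y] @ z) = g (x @ y @ z)" if "in_In I n (x @ y @ z)" "in_In I n y" for x y z
    using that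
  proof (induction "length y" arbitrary: x y z rule: less_induct)
    case less
    consider "length y = 1" | "length y = n" | "n < length y"
      using in_In_length_cases[OF less.prems(2)] n_ge_2 by linarith
    then show ?case
    proof cases
      case 1
      then obtain a where "y = [a]"
        by (cases y) auto
      then show ?thesis
        using singleton less.prems by simp
    next
      case 2
      then show ?thesis
        using absorb_n less.prems by simp
    next
      case 3
      let ?y' = "g (take n y) # drop n y"
      have y': "in_In I n ?y'"
        using in_In_reduce_prefix less.prems(2) 3 by simp
      have "in_In I n (x @ ?y' @ z)"
        using less.prems y' in_In_subst_infix by blast
      moreover have "length ?y' < length y"
        using 3 n_ge_2 by simp
      ultimately have IH: "g (x @ [g ?y'] @ z) = g (x @ ?y' @ z)"
        using less.hyps y' by blast
      have "g (x @ [g y] @ z) = g (x @ [g ?y'] @ z)"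
        using reduce_prefix_of_nest[OF nested less.prems(2) 3] by simp
      also have "\<dots> = g (x @ [g (take n y)] @ drop n y @ z)"
        using IH by simp
      also have "\<dots> = g (x @ y @ z)"
        using absorb_n[of x "take n y" "drop n y @ z"] less.prems(1) 3 by (simp flip: append_assoc)
      finally show ?thesis .
    qed
  qed
qed

lemma variadic_assoc_imp_n_associative:
  assumes va: "variadic_assoc I n g"
  shows "n_associative I n g"
proof -
  have absorb: "g (x @ [g y] @ z) = g (x @ y @ z)" if "in_In I n (x @ y @ z)" "in_In I n y" for x y z
    using va that unfolding variadic_assoc_def by blast
  have mem: "in_In I n xs" if "set xs \<subseteq> I" "length xs = n \<or> length xs = 2 * n - 1" for xs
    using that n_ge_2 by (auto simp: in_In_iff_length intro: exI[of _ 1] exI[of _ 2])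
  have "assoc_n I n g"
    unfolding assoc_n_def
  proof (intro allI impI, elim conjE)
    fix x y z x' y' z' :: "real list"
    assume set_xyz: "set (x @ y @ z) \<subseteq> I" and len: "length (x @ y @ z) = 2 * n - 1"
      and "length y = n" "length y' = n" and eq: "x @ y @ z = x' @ y' @ z'"
    have "in_In I n y"
      using mem[of y] set_xyz \<open>length y = n\<close> by simp
    moreover have "in_In I n y'"
      using mem[of y'] set_xyz \<open>length y' = n\<close> unfolding eq by simp
    moreover have "in_In I n (x' @ y' @ z')"
      using mem set_xyz len unfolding eq by blast
    moreover have "in_In I n (x @ y @ z)"
      using mem set_xyz len by blast
    ultimately have "g (x @ [g y] @ z) = g (x @ y @ z)" "g (x' @ [g y'] @ z') = g (x' @ y' @ z')"
      using absorb eq by simp_all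
    then show "g (x @ [g y] @ z) = g (x' @ [g y'] @ z')"
      using eq by simp
  qed
  moreover have "g xs = nest g n xs" if "in_In I n xs" for xs
    using that
  proof (induction "length xs" arbitrary: xs rule: less_induct)
    case less
    show ?case
    proof (cases "n < length xs")
      case True
      let ?xs' = "g (take n xs) # drop n xs"
      have "in_In I n (take n xs)"
        using less.prems True by (intro mem) (auto simp: in_In_def dest: in_set_takeD)
      then have "g xs = g ?xs'"
        using absorb[of "[]" "take n xs" "drop n xs"] less.prems by simp
      also have "\<dots> = nest g n ?xs'"
        using less.hyps[of ?xs'] in_In_reduce_prefix[of xs] less.prems True n_ge_2 by simp
      also have "\<dots> = nest g n xs"
        by (rule nest_reduce_prefix[symmetric, OF n_ge_2 True])
      finally show ?thesis .
    qed (simp add: nest_short)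
  qed
  moreover have "g [g xs] = g xs" if "in_In I n xs" for xs
    using absorb[of "[]" xs "[]"] that by simp
  moreover have "g (x @ [g [y]] @ z) = g (x @ [y] @ z)" if "in_In I n (x @ [y] @ z)" for x y z
    using absorb[of x "[y]" z] that by (simp add: in_In_def)
  ultimately show ?thesis
    unfolding n_associative_def by blast
qed

lemma variadic_assoc_imp_compose:
  assumes "variadic_assoc I n g" and "length xss = n" and "\<forall>xs\<in>set xss. in_In I n xs"
  shows "g (map g xss) = g (concat xss)"
proof -
  have "in_In I n (map g xss)"
    using assms(2,3) closed n_ge_2 by (intro in_In_of_length_n) auto
  then show ?thesis
    using variadic_assoc_absorb_blocks[OF assms(1,3), of "[]"] by simp
qed

lemma compose_around_block:
  assumes compose: "\<And>xss. length xss = n \<Longrightarrow> \<forall>xs\<in>set xss. in_In I n xs \<Longrightarrow> g (map g xss) = g (concat xss)"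
    and "set x \<subseteq> I" "set z \<subseteq> I" "in_In I n w" "length x + length z = n - 1"
  shows "g (x @ w @ z) = g (map (\<lambda>a. g [a]) x @ [g w] @ map (\<lambda>a. g [a]) z)"
proof -
  let ?blocks = "map (\<lambda>a. [a]) x @ [w] @ map (\<lambda>a. [a]) z"
  have "\<forall>xs\<in>set ?blocks. in_In I n xs"
    using assms(2-4) by auto
  then show ?thesis
    using compose[of ?blocks] assms(5) n_ge_2 by (simp add: comp_def)
qed

lemma compose_imp_variadic_assoc:
  assumes idem: "\<And>xs. in_In I n xs \<Longrightarrow> g [g xs] = g xs"
    and compose: "\<And>xss. length xss = n \<Longrightarrow> \<forall>xs\<in>set xss. in_In I n xs \<Longrightarrow> g (map g xss) = g (concat xss)"
  shows "variadic_assoc I n g"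
  unfolding variadic_assoc_def
proof (intro allI impI, elim conjE)
  show "g (x @ [g y] @ z) = g (x @ y @ z)" if "in_In I n (x @ y @ z)" "in_In I n y" for x y z
    using that
  proof (induction "length x + length z" arbitrary: x z rule: less_induct)
    case less
    have s: "in_In I n (x @ [g y] @ z)"
      using less.prems closed in_In_subst_infix[of I n y "[g y]"] by simp
    show ?case
    proof (cases "x = [] \<and> z = []")
      case True
      then show ?thesis
        using idem less.prems by simp
    next
      case False
      then have "length x + length z \<ge> n - 1"
        using in_In_length_cases[OF s] n_ge_2 by auto
      then obtain x1 x2 z1 z2 where split: "x = x1 @ x2" "z = z1 @ z2" "length x1 + length z2 = n - 1"
        using split_off_outer by blast
      obtain k where k: "length (x @ [g y] @ z) = 1 + k * (n - 1)"
        using s by (auto simp: in_In_iff_length)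
      have "k \<noteq> 0"
        using k False by (intro notI) simp
      then obtain j where "k = Suc j"
        using not0_implies_Suc by blast
      then have "length (x2 @ [g y] @ z1) = 1 + j * (n - 1)"
        using k split by simp
      moreover have "set (x2 @ [g y] @ z1) \<subseteq> I"
        using s split by (simp add: in_In_def)
      ultimately have mid: "in_In I n (x2 @ [g y] @ z1)"
        unfolding in_In_iff_length by blast
      then have mid': "in_In I n (x2 @ y @ z1)"
        using less.prems(2) closed in_In_subst_infix[of I n y "[g y]"] by simp
      have outer: "set x1 \<subseteq> I" "set z2 \<subseteq> I"
        using s split by (auto simp: in_In_def)
      have "length x2 + length z1 < length x + length z"
        using split n_ge_2 by simp
      then have IH: "g (x2 @ [g y] @ z1) = g (x2 @ y @ z1)"
        using less.hyps mid' less.prems(2) by blast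
      have "g (x @ [g y] @ z) = g (x1 @ (x2 @ [g y] @ z1) @ z2)"
        using split by simp
      also have "\<dots> = g (map (\<lambda>a. g [a]) x1 @ [g (x2 @ [g y] @ z1)] @ map (\<lambda>a. g [a]) z2)"
        by (rule compose_around_block[OF compose outer mid split(3)])
      also have "\<dots> = g (map (\<lambda>a. g [a]) x1 @ [g (x2 @ y @ z1)] @ map (\<lambda>a. g [a]) z2)"
        by (simp only: IH)
      also have "\<dots> = g (x1 @ (x2 @ y @ z1) @ z2)"
        by (rule compose_around_block[OF compose outer mid' split(3), symmetric])
      also have "\<dots> = g (x @ y @ z)"
        using split by simp
      finally show ?thesis .
    qed
  qed
qed

end

theorem proposition2p5:
  fixes I :: "real set" and n :: nat and g :: "real list \<Rightarrow> real"
  assumes "nontrivial_interval I"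
    and "n \<ge> 2"
    and "\<forall>xs. in_In I n xs \<longrightarrow> g xs \<in> I"
  shows
   "(n_associative I n g
     \<longleftrightarrow> ((\<forall>xs. in_In I n xs \<longrightarrow> g [g xs] = g xs) \<and>
          (\<forall>x y z x' y' z'. in_In I n (x @ y @ z) \<and> in_In I n (x' @ y' @ z') \<and>
              in_In I n y \<and> in_In I n y' \<and> x @ y @ z = x' @ y' @ z' \<longrightarrow>
              g (x @ [g y] @ z) = g (x' @ [g y'] @ z')))) \<and>
    (n_associative I n g
     \<longleftrightarrow> (\<forall>x y z. in_In I n (x @ y @ z) \<and> in_In I n y \<longrightarrow>
              g (x @ [g y] @ z) = g (x @ y @ z))) \<and>
    (n_associative I n g
     \<longleftrightarrow> ((\<forall>xs. in_In I n xs \<longrightarrow> g [g xs] = g xs) \<and>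
          (\<forall>xss. length xss = n \<and> (\<forall>xs\<in>set xss. in_In I n xs) \<longrightarrow>
              g (map g xss) = g (concat xss))))"
proof -
  note n2 = assms(2)
  have closed: "\<And>xs. in_In I n xs \<Longrightarrow> g xs \<in> I"
    using assms(3) by blast
  have i_iii: "n_associative I n g \<longleftrightarrow> variadic_assoc I n g"
    using n_associative_imp_variadic_assoc[where I = I and n = n and g = g, OF n2 closed]
      variadic_assoc_imp_n_associative[where I = I and n = n and g = g, OF n2 closed] by blast
  have iii_iv: "variadic_assoc I n g \<longleftrightarrow>
      (\<forall>xs. in_In I n xs \<longrightarrow> g [g xs] = g xs) \<and>
      (\<forall>xss. length xss = n \<and> (\<forall>xs\<in>set xss. in_In I n xs) \<longrightarrow> g (map g xss) = g (concat xss))"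
    (is "_ \<longleftrightarrow> ?idem \<and> ?compose")
  proof
    assume "variadic_assoc I n g"
    then show "?idem \<and> ?compose"
      using variadic_assoc_iff_idem_and_infix_invariant[of I n g]
        variadic_assoc_imp_compose[where I = I and n = n and g = g, OF n2 closed] by blast
  next
    assume "?idem \<and> ?compose"
    then show "variadic_assoc I n g"
      using compose_imp_variadic_assoc[where I = I and n = n and g = g, OF n2 closed] by blast
  qed
  show ?thesis
    unfolding variadic_assoc_def[symmetric]
    using i_iii iii_iv variadic_assoc_iff_idem_and_infix_invariant[of I n g] by blast
qed

end
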